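(* Let $\gamma>0$. Let $(\mathbf{x},\mathbf{u})$ have joint density $p(\mathbf{x},\mathbf{u})=(1-\epsilon(\mathbf{u}))p^{\star}(\mathbf{x},\mathbf{u})+\epsilon(\mathbf{u})\delta(\mathbf{x},\mathbf{u})$ with marginals $p(\mathbf{x})$, $p(\mathbf{u})$, and let a binary label $y\in\{0,1\}$ satisfy $p(y=0)=p(y=1)=\tfrac12$, $p(\mathbf{x},\mathbf{u}|y=1)=p(\mathbf{x},\mathbf{u})$ and $p(\mathbf{x},\mathbf{u}|y=0)=p(\mathbf{x})p(\mathbf{u})$. For a positive function $r(\mathbf{x},\mathbf{u})$ define the $\gamma$-cross entropy $$d_\gamma(p(y|\mathbf{x},\mathbf{u}),r(\mathbf{x},\mathbf{u});p(\mathbf{x},\mathbf{u})):=-\frac{1}{\gamma}\log\iint\sum_{y=0}^{1}\left\{\frac{r(\mathbf{x},\mathbf{u})^{y(\gamma+1)}}{1+r(\mathbf{x},\mathbf{u})^{\gamma+1}}\right\}^{\frac{\gamma}{\gamma+1}}p(y,\mathbf{x},\mathbf{u})\,d\mathbf{x}\,d\mathbf{u},$$ and let $$\nu:=\iint\left\{\frac{r(\mathbf{x},\mathbf{u})^{\gamma+1}}{1+r(\mathbf{x},\mathbf{u})^{\gamma+1}}\right\}^{\frac{\gamma}{\gamma+1}}\epsilon(\mathbf{u})\delta(\mathbf{x},\mathbf{u})\,d\mathbf{x}\,d\mathbf{u}.$$ Assume $\nu$ is sufficiently small. Then $$d_\gamma(p(y|\mathbf{x},\mathbf{u}),r(\mathbf{x},\mathbf{u});p(\mathbf{x},\mathbf{u}))=J[r]+O(\nu),$$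 where $$J[r]:=-\frac{1}{\gamma}\log\left[\frac12\iint\left\{\frac{1}{1+r(\mathbf{x},\mathbf{u})^{\gamma+1}}\right\}^{\frac{\gamma}{\gamma+1}}p(\mathbf{x})p(\mathbf{u})\,d\mathbf{x}\,d\mathbf{u}+\frac12\iint\left\{\frac{r(\mathbf{x},\mathbf{u})^{\gamma+1}}{1+r(\mathbf{x},\mathbf{u})^{\gamma+1}}\right\}^{\frac{\gamma}{\gamma+1}}(1-\epsilon(\mathbf{u}))p^{\star}(\mathbf{x},\mathbf{u})\,d\mathbf{x}\,d\mathbf{u}\right].$$ Furthermore, if $p(\mathbf{x})$, $p(\mathbf{u})$ and $r(\mathbf{x},\mathbf{u})$ are positive for all $\mathbf{x},\mathbf{u}$, then $J[r]$ is minimized at $$r^{\star}(\mathbf{x},\mathbf{u})=\frac{(1-\epsilon(\mathbf{u}))p^{\star}(\mathbf{x}|\mathbf{u})}{p(\mathbf{x})}.$$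
   Context: Here $p^{\star}(\mathbf{x},\mathbf{u})=p^{\star}(\mathbf{x}|\mathbf{u})p(\mathbf{u})$ is the target (noncontaminated) joint density, $\delta(\mathbf{x},\mathbf{u})=\delta(\mathbf{x}|\mathbf{u})p(\mathbf{u})$ is an outlier density, and $\epsilon(\mathbf{u})\in[0,1)$ is a contamination ratio that may depend on $\mathbf{u}$ (it is not assumed small). $p(\mathbf{x})=\int p(\mathbf{x}|\mathbf{u})p(\mathbf{u})d\mathbf{u}$ is the contaminated marginal. $p(y,\mathbf{x},\mathbf{u})=p(\mathbf{x},\mathbf{u}|y)p(y)$. $O(\nu)$ denotes a term bounded by a constant times $\nu$ as $\nu\to0$. *)

theory Defs
  imports "HOL-Analysis.Analysis"
begin

text \<open>The data x ranges over the measure space Mx, the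
  covariate u over Mu; all densities are w.r.t. these reference measures.
  pu = p(u); ps x u = p*(x|u); dl x u = delta(x|u); eps u = epsilon(u).\<close>

definition is_density :: "'b measure \<Rightarrow> ('b \<Rightarrow> real) \<Rightarrow> bool" where
  "is_density M f \<longleftrightarrow> f \<in> borel_measurable M \<and> (\<forall>z\<in>space M. 0 \<le> f z)
     \<and> integrable M f \<and> integral\<^sup>L M f = 1"

definition is_cond_density :: "'a measure \<Rightarrow> 'b measure \<Rightarrow> ('a \<Rightarrow> 'b \<Rightarrow> real) \<Rightarrow> bool" where
  "is_cond_density Mx Mu q \<longleftrightarrow> (\<lambda>(x, u). q x u) \<in> borel_measurable (Mx \<Otimes>\<^sub>M Mu)
     \<and> (\<forall>x\<in>space Mx. \<forall>u\<in>space Mu. 0 \<le> q x u)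
     \<and> (\<forall>u\<in>space Mu. integrable Mx (\<lambda>x. q x u) \<and> (\<integral>x. q x u \<partial>Mx) = 1)"

definition contam_model :: "'a measure \<Rightarrow> 'b measure \<Rightarrow> ('b \<Rightarrow> real) \<Rightarrow> ('b \<Rightarrow> real)
    \<Rightarrow> ('a \<Rightarrow> 'b \<Rightarrow> real) \<Rightarrow> ('a \<Rightarrow> 'b \<Rightarrow> real) \<Rightarrow> bool" where
  "contam_model Mx Mu pu eps ps dl \<longleftrightarrow>
     sigma_finite_measure Mx \<and> sigma_finite_measure Mu \<and> is_density Mu pu
     \<and> is_cond_density Mx Mu ps \<and> is_cond_density Mx Mu dl
     \<and> eps \<in> borel_measurable Mu \<and> (\<forall>u\<in>space Mu. 0 \<le> eps u \<and> eps u < 1)"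

definition pjoint :: "('b \<Rightarrow> real) \<Rightarrow> ('b \<Rightarrow> real) \<Rightarrow> ('a \<Rightarrow> 'b \<Rightarrow> real) \<Rightarrow> ('a \<Rightarrow> 'b \<Rightarrow> real)
    \<Rightarrow> 'a \<Rightarrow> 'b \<Rightarrow> real" where
  "pjoint pu eps ps dl x u = (1 - eps u) * (ps x u * pu u) + eps u * (dl x u * pu u)"

definition pmarg :: "'b measure \<Rightarrow> ('b \<Rightarrow> real) \<Rightarrow> ('b \<Rightarrow> real) \<Rightarrow> ('a \<Rightarrow> 'b \<Rightarrow> real)
    \<Rightarrow> ('a \<Rightarrow> 'b \<Rightarrow> real) \<Rightarrow> 'a \<Rightarrow> real" where
  "pmarg Mu pu eps ps dl x = (\<integral>u. pjoint pu eps ps dl x u \<partial>Mu)"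

text \<open>p(y,x,u) = p(x,u|y) p(y) with p(y=0)=p(y=1)=1/2, p(x,u|y=1)=p(x,u),
  p(x,u|y=0)=p(x)p(u).\<close>
definition pyxu :: "'b measure \<Rightarrow> ('b \<Rightarrow> real) \<Rightarrow> ('b \<Rightarrow> real) \<Rightarrow> ('a \<Rightarrow> 'b \<Rightarrow> real)
    \<Rightarrow> ('a \<Rightarrow> 'b \<Rightarrow> real) \<Rightarrow> nat \<Rightarrow> 'a \<Rightarrow> 'b \<Rightarrow> real" where
  "pyxu Mu pu eps ps dl y x u =
     (if y = 1 then 1/2 * pjoint pu eps ps dl x u
      else 1/2 * (pmarg Mu pu eps ps dl x * pu u))"

definition dgamma :: "real \<Rightarrow> 'a measure \<Rightarrow> 'b measure \<Rightarrow> ('b \<Rightarrow> real) \<Rightarrow> ('b \<Rightarrow> real)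
    \<Rightarrow> ('a \<Rightarrow> 'b \<Rightarrow> real) \<Rightarrow> ('a \<Rightarrow> 'b \<Rightarrow> real) \<Rightarrow> ('a \<Rightarrow> 'b \<Rightarrow> real) \<Rightarrow> real" where
  "dgamma \<gamma> Mx Mu pu eps ps dl r =
     - (1/\<gamma>) * ln (\<integral>(x, u). (\<Sum>y\<in>{0, 1::nat}.
         ((r x u powr (real y * (\<gamma> + 1))) / (1 + r x u powr (\<gamma> + 1))) powr (\<gamma> / (\<gamma> + 1))
         * pyxu Mu pu eps ps dl y x u) \<partial>(Mx \<Otimes>\<^sub>M Mu))"

definition nu_contam :: "real \<Rightarrow> 'a measure \<Rightarrow> 'b measure \<Rightarrow> ('b \<Rightarrow> real) \<Rightarrow> ('b \<Rightarrow> real)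
    \<Rightarrow> ('a \<Rightarrow> 'b \<Rightarrow> real) \<Rightarrow> ('a \<Rightarrow> 'b \<Rightarrow> real) \<Rightarrow> real" where
  "nu_contam \<gamma> Mx Mu pu eps dl r =
     (\<integral>(x, u). ((r x u powr (\<gamma> + 1)) / (1 + r x u powr (\<gamma> + 1))) powr (\<gamma> / (\<gamma> + 1))
         * eps u * (dl x u * pu u) \<partial>(Mx \<Otimes>\<^sub>M Mu))"

definition Jarg :: "real \<Rightarrow> 'a measure \<Rightarrow> 'b measure \<Rightarrow> ('b \<Rightarrow> real) \<Rightarrow> ('b \<Rightarrow> real)
    \<Rightarrow> ('a \<Rightarrow> 'b \<Rightarrow> real) \<Rightarrow> ('a \<Rightarrow> 'b \<Rightarrow> real) \<Rightarrow> ('a \<Rightarrow> 'b \<Rightarrow> real) \<Rightarrow> real" where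
  "Jarg \<gamma> Mx Mu pu eps ps dl r =
     1/2 * (\<integral>(x, u). (1 / (1 + r x u powr (\<gamma> + 1))) powr (\<gamma> / (\<gamma> + 1))
         * (pmarg Mu pu eps ps dl x * pu u) \<partial>(Mx \<Otimes>\<^sub>M Mu))
   + 1/2 * (\<integral>(x, u). ((r x u powr (\<gamma> + 1)) / (1 + r x u powr (\<gamma> + 1))) powr (\<gamma> / (\<gamma> + 1))
         * ((1 - eps u) * (ps x u * pu u)) \<partial>(Mx \<Otimes>\<^sub>M Mu))"

definition Jfun :: "real \<Rightarrow> 'a measure \<Rightarrow> 'b measure \<Rightarrow> ('b \<Rightarrow> real) \<Rightarrow> ('b \<Rightarrow> real)
    \<Rightarrow> ('a \<Rightarrow> 'b \<Rightarrow> real) \<Rightarrow> ('a \<Rightarrow> 'b \<Rightarrow> real) \<Rightarrow> ('a \<Rightarrow> 'b \<Rightarrow> real) \<Rightarrow> real" where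
  "Jfun \<gamma> Mx Mu pu eps ps dl r = - (1/\<gamma>) * ln (Jarg \<gamma> Mx Mu pu eps ps dl r)"

definition rstar :: "'b measure \<Rightarrow> ('b \<Rightarrow> real) \<Rightarrow> ('b \<Rightarrow> real) \<Rightarrow> ('a \<Rightarrow> 'b \<Rightarrow> real)
    \<Rightarrow> ('a \<Rightarrow> 'b \<Rightarrow> real) \<Rightarrow> 'a \<Rightarrow> 'b \<Rightarrow> real" where
  "rstar Mu pu eps ps dl x u = (1 - eps u) * ps x u / pmarg Mu pu eps ps dl x"

end

theory Submission
  imports Defs
begin

text \<open>
  Splitting the y = 1 term of the \<gamma>-cross entropy into its inlier and outlier parts gives
  d_\<gamma> = -(1/\<gamma>) ln (J' + \<nu>/2), where J' is the bracket of J[r]; hence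
  |d_\<gamma> - J[r]| = (1/\<gamma>) ln (1 + \<nu>/(2 J')) \<le> \<nu>/(2 a \<gamma>) whenever J' \<ge> a,
  for every \<nu> \<ge> 0.

  For the minimiser put p = \<gamma> + 1, A = p(x) p(u) and B = (1 - \<epsilon>(u)) p*(x|u) p(u).
  Pointwise, the integrand of J' is t^(1-1/p) A + s^(1-1/p) B with weights
  t = 1/(1 + r^p) and s = r^p/(1 + r^p) summing to 1; by Young's inequality it is at most
  (A^p + B^p)^(1/p), with equality when r = B/A = r*. So r* maximises J' and
  minimises J[r] = -(1/\<gamma>) ln J'.
\<close>

lemma two_term_Holder:
  fixes p A B s t :: real
  assumes p: "p > 1" and A: "0 \<le> A" and B: "0 \<le> B" and s: "0 \<le> s" and t: "0 \<le> t"
    and st: "s + t = 1"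
  shows "t powr (1 - 1/p) * A + s powr (1 - 1/p) * B \<le> (A powr p + B powr p) powr (1/p)"
proof (cases "A = 0 \<and> B = 0")
  case True
  then show ?thesis by simp
next
  case False
  define M where "M = (A powr p + B powr p) powr (1/p)"
  have M: "M > 0" using False A B by (auto simp: M_def add_nonneg_eq_0_iff)
  have Mp: "M powr p = A powr p + B powr p" using p by (simp add: M_def powr_powr)
  have young: "C * x powr (1 - 1/p) \<le> M * ((C/M) powr p / p + x * (1 - 1/p))"
    if "0 \<le> C" "0 \<le> x" for C x
  proof -
    have "C / M * x powr (1 - 1/p) \<le> (C/M) powr p / p + (x powr (1 - 1/p)) powr (p / (p - 1)) / (p / (p - 1))"
      using p that M by (intro Youngs_inequality) (auto simp: field_simps)
    also have "(x powr (1 - 1/p)) powr (p / (p - 1)) = x"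
      using p that by (simp add: powr_powr field_simps)
    finally show ?thesis using M p by (simp add: field_simps)
  qed
  have "t powr (1 - 1/p) * A + s powr (1 - 1/p) * B
      \<le> M * ((A/M) powr p / p + t * (1 - 1/p)) + M * ((B/M) powr p / p + s * (1 - 1/p))"
    using young[OF A t] young[OF B s] by (simp add: mult.commute)
  also have "\<dots> = M * ((A powr p + B powr p) / M powr p / p + (s + t) * (1 - 1/p))"
    using A B M by (simp add: powr_divide algebra_simps add_divide_distrib)
  also have "\<dots> = M" using M p by (simp add: Mp [symmetric] st field_simps)
  finally show ?thesis by (simp add: M_def)
qed

lemma two_term_Holder_eq:
  fixes p A B :: real
  assumes p: "p > 1" and A: "0 < A" and B: "0 \<le> B"
  defines "S \<equiv> A powr p + B powr p"
  shows "(A powr p / S) powr (1 - 1/p) * A + (B powr p / S) powr (1 - 1/p) * B = S powr (1/p)"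
proof -
  have S: "S > 0" using A B by (simp add: S_def add_pos_nonneg)
  have scaled: "(X powr p / S) powr (1 - 1/p) * X = X powr p / S powr (1 - 1/p)" if "0 \<le> X" for X
  proof (cases "X = 0")
    case False
    then have "(X powr p / S) powr (1 - 1/p) * X = X powr (p * (1 - 1/p) + 1) / S powr (1 - 1/p)"
      using that S by (simp add: powr_divide powr_powr powr_add)
    also have "p * (1 - 1/p) + 1 = p" using p by (simp add: field_simps)
    finally show ?thesis .
  qed simp
  have "(A powr p / S) powr (1 - 1/p) * A + (B powr p / S) powr (1 - 1/p) * B = S / S powr (1 - 1/p)"
    unfolding scaled[OF less_imp_le[OF A]] scaled[OF B] by (simp add: S_def add_divide_distrib)
  also have "\<dots> = S powr (1 - (1 - 1/p))" using S by (simp add: powr_diff)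
  also have "\<dots> = S powr (1/p)" by simp
  finally show ?thesis .
qed

lemma abs_ln_add_le:
  fixes a I n :: real
  assumes "0 < a" "a \<le> I" "0 \<le> n"
  shows "\<bar>ln (I + n) - ln I\<bar> \<le> n / a"
proof -
  have "1 + n / I = (I + n) / I" using assms by (simp add: field_simps)
  then have "ln (I + n) - ln I = ln (1 + n / I)" using assms by (simp add: ln_div)
  moreover have "0 \<le> ln (1 + n / I)" using assms by simp
  moreover have "ln (1 + n / I) \<le> n / I" using assms by (intro ln_add_one_self_le_self) simp
  moreover have "n / I \<le> n / a" using assms by (intro divide_left_mono) auto
  ultimately show ?thesis by simp
qed

lemma integrable_mult_bounded_factor:
  fixes f h :: "'a \<Rightarrow> 'b \<Rightarrow> real"
  assumes f: "integrable (M1 \<Otimes>\<^sub>M M2) (\<lambda>(x, y). f x y)"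
    and h: "(\<lambda>(x, y). h x y) \<in> borel_measurable (M1 \<Otimes>\<^sub>M M2)"
    and bound: "\<And>x y. x \<in> space M1 \<Longrightarrow> y \<in> space M2 \<Longrightarrow> \<bar>h x y\<bar> \<le> 1"
  shows "integrable (M1 \<Otimes>\<^sub>M M2) (\<lambda>(x, y). h x y * f x y)"
proof (rule Bochner_Integration.integrable_bound[OF f])
  show "(\<lambda>(x, y). h x y * f x y) \<in> borel_measurable (M1 \<Otimes>\<^sub>M M2)" using f h by measurable
  show "AE z in M1 \<Otimes>\<^sub>M M2. norm ((\<lambda>(x, y). h x y * f x y) z) \<le> norm ((\<lambda>(x, y). f x y) z)"
    using bound
    by (intro AE_I2) (auto simp: space_pair_measure abs_mult intro!: mult_left_le_one_le)
qed

lemma (in pair_sigma_finite) integrable_product_function: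
  fixes f :: "'a \<Rightarrow> real" and g :: "'b \<Rightarrow> real"
  assumes f: "integrable M1 f" and g: "integrable M2 g"
  shows "integrable (M1 \<Otimes>\<^sub>M M2) (\<lambda>(x, y). f x * g y)"
proof (rule Fubini_integrable)
  show "(\<lambda>(x, y). f x * g y) \<in> borel_measurable (M1 \<Otimes>\<^sub>M M2)" using f g by measurable
  show "integrable M1 (\<lambda>x. \<integral>y. norm ((\<lambda>(x, y). f x * g y) (x, y)) \<partial>M2)"
    using f g by (simp add: abs_mult)
  show "AE x in M1. integrable M2 (\<lambda>y. (\<lambda>(x, y). f x * g y) (x, y))"
    using g by simp
qed

lemma (in pair_sigma_finite) integrable_cond_density_mult:
  fixes q :: "'a \<Rightarrow> 'b \<Rightarrow> real" and w :: "'b \<Rightarrow> real"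
  assumes q: "is_cond_density M1 M2 q" and w: "integrable M2 w"
    and w_nonneg: "\<And>y. y \<in> space M2 \<Longrightarrow> 0 \<le> w y"
  shows "integrable (M1 \<Otimes>\<^sub>M M2) (\<lambda>(x, y). q x y * w y)"
proof -
  have [measurable]: "(\<lambda>(x, y). q x y) \<in> borel_measurable (M1 \<Otimes>\<^sub>M M2)" "w \<in> borel_measurable M2"
    using q w by (auto simp: is_cond_density_def)
  have q_nonneg: "\<And>x y. x \<in> space M1 \<Longrightarrow> y \<in> space M2 \<Longrightarrow> 0 \<le> q x y"
    using q by (simp add: is_cond_density_def)
  have inner: "(\<integral>\<^sup>+ x. ennreal (q x y * w y) \<partial>M1) = ennreal (w y)" if y: "y \<in> space M2" for y
  proof -
    have "(\<integral>\<^sup>+ x. ennreal (q x y) \<partial>M1) = 1"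
      using q q_nonneg y by (subst nn_integral_eq_integral) (auto simp: is_cond_density_def)
    moreover have "(\<integral>\<^sup>+ x. ennreal (q x y * w y) \<partial>M1) = (\<integral>\<^sup>+ x. ennreal (q x y) \<partial>M1) * ennreal (w y)"
      using q_nonneg w_nonneg y q
      by (subst nn_integral_multc [symmetric]) (auto simp: ennreal_mult is_cond_density_def intro!: nn_integral_cong)
    ultimately show ?thesis by simp
  qed
  have "(\<integral>\<^sup>+ z. ennreal ((\<lambda>(x, y). q x y * w y) z) \<partial>(M1 \<Otimes>\<^sub>M M2))
      = (\<integral>\<^sup>+ y. \<integral>\<^sup>+ x. ennreal (q x y * w y) \<partial>M1 \<partial>M2)"
    by (subst nn_integral_snd [symmetric]) auto
  also have "\<dots> = (\<integral>\<^sup>+ y. ennreal (w y) \<partial>M2)"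
    by (rule nn_integral_cong) (simp add: inner)
  also have "\<dots> < \<infinity>"
    using w w_nonneg by (simp add: nn_integral_eq_integral)
  finally show ?thesis
    using q_nonneg w_nonneg
    by (intro integrableI_nonneg) (auto intro!: AE_I2 simp: space_pair_measure)
qed

text \<open>\<open>gamma_post0\<close> and \<open>gamma_post1\<close> are p_r(y|x,u)^(\<gamma>/(\<gamma>+1)) for y = 0, 1
  in the model p_r(y = 1|x,u) = r^(\<gamma>+1) / (1 + r^(\<gamma>+1)).\<close>

definition gamma_post0 :: "real \<Rightarrow> real \<Rightarrow> real" where
  "gamma_post0 \<gamma> \<rho> = (1 / (1 + \<rho> powr (\<gamma> + 1))) powr (\<gamma> / (\<gamma> + 1))"

definition gamma_post1 :: "real \<Rightarrow> real \<Rightarrow> real" where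
  "gamma_post1 \<gamma> \<rho> = (\<rho> powr (\<gamma> + 1) / (1 + \<rho> powr (\<gamma> + 1))) powr (\<gamma> / (\<gamma> + 1))"

lemma gamma_post_bounds:
  assumes "\<gamma> > 0"
  shows "0 < gamma_post0 \<gamma> \<rho>" "\<bar>gamma_post0 \<gamma> \<rho>\<bar> \<le> 1"
    and "0 \<le> gamma_post1 \<gamma> \<rho>" "\<bar>gamma_post1 \<gamma> \<rho>\<bar> \<le> 1"
proof -
  have "0 < 1 + \<rho> powr (\<gamma> + 1)" by (simp add: add_pos_nonneg)
  then show "0 < gamma_post0 \<gamma> \<rho>" "\<bar>gamma_post0 \<gamma> \<rho>\<bar> \<le> 1"
      "0 \<le> gamma_post1 \<gamma> \<rho>" "\<bar>gamma_post1 \<gamma> \<rho>\<bar> \<le> 1"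
    using assms by (auto simp: gamma_post0_def gamma_post1_def divide_le_eq_1 intro!: powr_le1)
qed

lemma borel_measurable_gamma_post [measurable]:
  assumes [measurable]: "f \<in> borel_measurable M"
  shows "(\<lambda>z. gamma_post0 \<gamma> (f z)) \<in> borel_measurable M"
    and "(\<lambda>z. gamma_post1 \<gamma> (f z)) \<in> borel_measurable M"
  unfolding gamma_post0_def gamma_post1_def by measurable

lemma gamma_post_mix_le:
  assumes "\<gamma> > 0" "0 \<le> A" "0 \<le> B"
  shows "gamma_post0 \<gamma> \<rho> * A + gamma_post1 \<gamma> \<rho> * B
           \<le> (A powr (\<gamma> + 1) + B powr (\<gamma> + 1)) powr (1 / (\<gamma> + 1))"
proof -
  have "0 < 1 + \<rho> powr (\<gamma> + 1)" by (simp add: add_pos_nonneg)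
  then have weights: "\<rho> powr (\<gamma> + 1) / (1 + \<rho> powr (\<gamma> + 1)) + 1 / (1 + \<rho> powr (\<gamma> + 1)) = 1"
    by (simp add: add_divide_distrib [symmetric])
  have "\<gamma> / (\<gamma> + 1) = 1 - 1 / (\<gamma> + 1)" using assms by (simp add: field_simps)
  then show ?thesis
    using assms weights
      two_term_Holder[of "\<gamma> + 1" A B "\<rho> powr (\<gamma> + 1) / (1 + \<rho> powr (\<gamma> + 1))" "1 / (1 + \<rho> powr (\<gamma> + 1))"]
    by (simp add: gamma_post0_def gamma_post1_def)
qed

lemma gamma_post_mix_at_ratio:
  assumes "\<gamma> > 0" "0 < A" "0 \<le> B"
  shows "gamma_post0 \<gamma> (B / A) * A + gamma_post1 \<gamma> (B / A) * B
           = (A powr (\<gamma> + 1) + B powr (\<gamma> + 1)) powr (1 / (\<gamma> + 1))"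
proof -
  define S where "S = A powr (\<gamma> + 1) + B powr (\<gamma> + 1)"
  have "0 < A powr (\<gamma> + 1)" using assms by simp
  then have "1 / (1 + (B / A) powr (\<gamma> + 1)) = A powr (\<gamma> + 1) / S"
    and "(B / A) powr (\<gamma> + 1) / (1 + (B / A) powr (\<gamma> + 1)) = B powr (\<gamma> + 1) / S"
    using assms by (simp_all add: S_def powr_divide field_simps)
  moreover have "\<gamma> / (\<gamma> + 1) = 1 - 1 / (\<gamma> + 1)" using assms by (simp add: field_simps)
  ultimately show ?thesis
    using assms two_term_Holder_eq[of "\<gamma> + 1" A B]
    by (simp add: gamma_post0_def gamma_post1_def S_def)
qed

lemma integral_pos_of_pos:
  fixes f :: "'a \<Rightarrow> real"
  assumes f: "integrable M f" and pos: "\<And>z. z \<in> space M \<Longrightarrow> 0 < f z"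
    and not_null: "emeasure M (space M) \<noteq> 0"
  shows "0 < integral\<^sup>L M f"
proof -
  have nonneg: "0 \<le> integral\<^sup>L M f" using pos by (intro integral_nonneg_AE AE_I2) (simp add: less_imp_le)
  have "integral\<^sup>L M f \<noteq> 0"
  proof
    assume "integral\<^sup>L M f = 0"
    then have "AE z in M. f z = 0"
      using f pos by (subst integral_nonneg_eq_0_iff_AE [symmetric]) (auto intro!: AE_I2 less_imp_le)
    then have "AE z in M. False" by (rule AE_mp) (use pos in \<open>fastforce intro!: AE_I2\<close>)
    then show False using not_null by (simp add: ae_filter_eq_bot_iff [symmetric] eventually_False)
  qed
  then show ?thesis using nonneg by simp
qed

locale contamination =
  fixes Mx :: "'a measure" and Mu :: "'b measure" and pu eps :: "'b \<Rightarrow> real"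
    and ps dl :: "'a \<Rightarrow> 'b \<Rightarrow> real"
  assumes model: "contam_model Mx Mu pu eps ps dl"
begin

sublocale pair_sigma_finite Mx Mu
  using model by (simp add: contam_model_def pair_sigma_finite_def)

abbreviation px :: "'a \<Rightarrow> real" where
  "px \<equiv> pmarg Mu pu eps ps dl"

lemma pu_density: "is_density Mu pu"
  and ps_cond_density: "is_cond_density Mx Mu ps"
  and dl_cond_density: "is_cond_density Mx Mu dl"
  and eps_nonneg: "u \<in> space Mu \<Longrightarrow> 0 \<le> eps u"
  and eps_less_1: "u \<in> space Mu \<Longrightarrow> eps u < 1"
  using model by (auto simp: contam_model_def)

lemma measurable_model [measurable]:
  "pu \<in> borel_measurable Mu" "eps \<in> borel_measurable Mu"
  "(\<lambda>(x, u). ps x u) \<in> borel_measurable (Mx \<Otimes>\<^sub>M Mu)"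
  "(\<lambda>(x, u). dl x u) \<in> borel_measurable (Mx \<Otimes>\<^sub>M Mu)"
  using model by (auto simp: contam_model_def is_density_def is_cond_density_def)

lemma pu_nonneg: "u \<in> space Mu \<Longrightarrow> 0 \<le> pu u"
  and ps_nonneg: "x \<in> space Mx \<Longrightarrow> u \<in> space Mu \<Longrightarrow> 0 \<le> ps x u"
  and dl_nonneg: "x \<in> space Mx \<Longrightarrow> u \<in> space Mu \<Longrightarrow> 0 \<le> dl x u"
  using pu_density ps_cond_density dl_cond_density
  by (auto simp: is_density_def is_cond_density_def)

lemma integrable_joint_part:
  assumes "is_cond_density Mx Mu q"
  shows "integrable (Mx \<Otimes>\<^sub>M Mu) (\<lambda>(x, u). q x u * pu u)"
  using integrable_cond_density_mult[OF assms] pu_density pu_nonneg by (auto simp: is_density_def)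

lemma integrable_inlier_part:
  "integrable (Mx \<Otimes>\<^sub>M Mu) (\<lambda>(x, u). (1 - eps u) * (ps x u * pu u))"
  using eps_nonneg eps_less_1
  by (intro integrable_mult_bounded_factor[OF integrable_joint_part[OF ps_cond_density]]) force+

lemma integrable_outlier_part:
  "integrable (Mx \<Otimes>\<^sub>M Mu) (\<lambda>(x, u). eps u * (dl x u * pu u))"
  using eps_nonneg eps_less_1
  by (intro integrable_mult_bounded_factor[OF integrable_joint_part[OF dl_cond_density]]) force+

lemma integrable_px: "integrable Mx px"
proof -
  have "integrable (Mx \<Otimes>\<^sub>M Mu) (\<lambda>(x, u). pjoint pu eps ps dl x u)"
    using Bochner_Integration.integrable_add[OF integrable_inlier_part integrable_outlier_part]
    by (simp add: pjoint_def case_prod_beta')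
  from integrable_fst'[OF this] show ?thesis by (simp add: pmarg_def [abs_def])
qed

lemma measurable_px [measurable]: "px \<in> borel_measurable Mx"
  using integrable_px by auto

lemma integrable_product_part:
  "integrable (Mx \<Otimes>\<^sub>M Mu) (\<lambda>(x, u). px x * pu u)"
  using integrable_product_function[OF integrable_px] pu_density by (simp add: is_density_def)

definition J_integrand :: "real \<Rightarrow> ('a \<Rightarrow> 'b \<Rightarrow> real) \<Rightarrow> 'a \<times> 'b \<Rightarrow> real" where
  "J_integrand \<gamma> r = (\<lambda>(x, u). gamma_post0 \<gamma> (r x u) * (px x * pu u)
                            + gamma_post1 \<gamma> (r x u) * ((1 - eps u) * (ps x u * pu u)))"

definition nu_integrand :: "real \<Rightarrow> ('a \<Rightarrow> 'b \<Rightarrow> real) \<Rightarrow> 'a \<times> 'b \<Rightarrow> real" where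
  "nu_integrand \<gamma> r = (\<lambda>(x, u). gamma_post1 \<gamma> (r x u) * (eps u * (dl x u * pu u)))"

context
  fixes \<gamma> :: real and r :: "'a \<Rightarrow> 'b \<Rightarrow> real"
  assumes gamma_pos: "\<gamma> > 0"
    and measurable_r [measurable]: "(\<lambda>(x, u). r x u) \<in> borel_measurable (Mx \<Otimes>\<^sub>M Mu)"
begin

lemma integrable_product_term:
  "integrable (Mx \<Otimes>\<^sub>M Mu) (\<lambda>(x, u). gamma_post0 \<gamma> (r x u) * (px x * pu u))"
  using gamma_post_bounds[OF gamma_pos]
  by (intro integrable_mult_bounded_factor[OF integrable_product_part]) auto

lemma integrable_inlier_term:
  "integrable (Mx \<Otimes>\<^sub>M Mu) (\<lambda>(x, u). gamma_post1 \<gamma> (r x u) * ((1 - eps u) * (ps x u * pu u)))"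
  using gamma_post_bounds[OF gamma_pos]
  by (intro integrable_mult_bounded_factor[OF integrable_inlier_part]) auto

lemma integrable_nu_integrand: "integrable (Mx \<Otimes>\<^sub>M Mu) (nu_integrand \<gamma> r)"
  unfolding nu_integrand_def using gamma_post_bounds[OF gamma_pos]
  by (intro integrable_mult_bounded_factor[OF integrable_outlier_part]) auto

lemma integrable_J_integrand: "integrable (Mx \<Otimes>\<^sub>M Mu) (J_integrand \<gamma> r)"
  using Bochner_Integration.integrable_add[OF integrable_product_term integrable_inlier_term]
  by (simp add: J_integrand_def case_prod_beta')

lemma Jarg_eq_integral: "Jarg \<gamma> Mx Mu pu eps ps dl r = 1/2 * integral\<^sup>L (Mx \<Otimes>\<^sub>M Mu) (J_integrand \<gamma> r)"
  using Bochner_Integration.integral_add[OF integrable_product_term integrable_inlier_term]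
  by (simp add: Jarg_def J_integrand_def gamma_post0_def gamma_post1_def case_prod_beta')

lemma nu_contam_eq_integral: "nu_contam \<gamma> Mx Mu pu eps dl r = integral\<^sup>L (Mx \<Otimes>\<^sub>M Mu) (nu_integrand \<gamma> r)"
  by (simp add: nu_contam_def nu_integrand_def gamma_post1_def mult.assoc)

lemma nu_contam_nonneg: "0 \<le> nu_contam \<gamma> Mx Mu pu eps dl r"
  unfolding nu_contam_eq_integral nu_integrand_def
  using gamma_post_bounds[OF gamma_pos] eps_nonneg dl_nonneg pu_nonneg
  by (intro integral_nonneg_AE AE_I2) (auto simp: space_pair_measure)

lemma dgamma_eq_ln_Jarg_nu:
  assumes r_pos: "\<And>x u. x \<in> space Mx \<Longrightarrow> u \<in> space Mu \<Longrightarrow> 0 < r x u"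
  shows "dgamma \<gamma> Mx Mu pu eps ps dl r
           = - (1/\<gamma>) * ln (Jarg \<gamma> Mx Mu pu eps ps dl r + nu_contam \<gamma> Mx Mu pu eps dl r / 2)"
proof -
  have pointwise: "(\<Sum>y\<in>{0, 1::nat}.
                      (r x u powr (real y * (\<gamma> + 1)) / (1 + r x u powr (\<gamma> + 1))) powr (\<gamma> / (\<gamma> + 1))
                      * pyxu Mu pu eps ps dl y x u)
                   = 1/2 * J_integrand \<gamma> r (x, u) + 1/2 * nu_integrand \<gamma> r (x, u)"
    if "x \<in> space Mx" "u \<in> space Mu" for x u
    \<comment> \<open>positivity of r matters: \<open>0 powr 0 = 0\<close>, so the y = 0 term would vanish where r = 0\<close>
    using r_pos[OF that]
    by (simp add: pyxu_def pjoint_def J_integrand_def nu_integrand_def gamma_post0_def gamma_post1_def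
        algebra_simps)
  have "(\<integral>(x, u). (\<Sum>y\<in>{0, 1::nat}.
                      (r x u powr (real y * (\<gamma> + 1)) / (1 + r x u powr (\<gamma> + 1))) powr (\<gamma> / (\<gamma> + 1))
                      * pyxu Mu pu eps ps dl y x u) \<partial>(Mx \<Otimes>\<^sub>M Mu))
        = (\<integral>z. 1/2 * J_integrand \<gamma> r z + 1/2 * nu_integrand \<gamma> r z \<partial>(Mx \<Otimes>\<^sub>M Mu))"
    using pointwise by (intro Bochner_Integration.integral_cong) (auto simp: space_pair_measure)
  also have "\<dots> = Jarg \<gamma> Mx Mu pu eps ps dl r + nu_contam \<gamma> Mx Mu pu eps dl r / 2"
    using integrable_J_integrand integrable_nu_integrand
    by (simp add: Jarg_eq_integral nu_contam_eq_integral)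
  finally show ?thesis by (simp add: dgamma_def)
qed

lemma dgamma_Jfun_diff_bound:
  assumes r_pos: "\<And>x u. x \<in> space Mx \<Longrightarrow> u \<in> space Mu \<Longrightarrow> 0 < r x u"
    and a: "0 < a" "a \<le> Jarg \<gamma> Mx Mu pu eps ps dl r"
  shows "\<bar>dgamma \<gamma> Mx Mu pu eps ps dl r - Jfun \<gamma> Mx Mu pu eps ps dl r\<bar>
           \<le> 1 / (2 * a * \<gamma>) * nu_contam \<gamma> Mx Mu pu eps dl r"
proof -
  define I where "I = Jarg \<gamma> Mx Mu pu eps ps dl r"
  define n where "n = nu_contam \<gamma> Mx Mu pu eps dl r"
  have "dgamma \<gamma> Mx Mu pu eps ps dl r - Jfun \<gamma> Mx Mu pu eps ps dl r = - ((ln (I + n/2) - ln I) / \<gamma>)"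
    by (simp add: dgamma_eq_ln_Jarg_nu[OF r_pos] Jfun_def I_def n_def diff_divide_distrib)
  then have "\<bar>dgamma \<gamma> Mx Mu pu eps ps dl r - Jfun \<gamma> Mx Mu pu eps ps dl r\<bar> = \<bar>ln (I + n/2) - ln I\<bar> / \<gamma>"
    using gamma_pos by simp
  also have "\<dots> \<le> (n/2) / a / \<gamma>"
    using a nu_contam_nonneg gamma_pos
    by (intro divide_right_mono abs_ln_add_le) (auto simp: I_def n_def)
  finally show ?thesis by (simp add: n_def)
qed

end

lemma J_integrand_pos:
  assumes gamma_pos: "\<gamma> > 0" and "z \<in> space (Mx \<Otimes>\<^sub>M Mu)"
    and px_pos: "\<And>x. x \<in> space Mx \<Longrightarrow> 0 < px x" and pu_pos: "\<And>u. u \<in> space Mu \<Longrightarrow> 0 < pu u"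
  shows "0 < J_integrand \<gamma> r z"
proof -
  obtain x u where z: "z = (x, u)" and x: "x \<in> space Mx" and u: "u \<in> space Mu"
    using assms(2) by (auto simp: space_pair_measure)
  have "0 < gamma_post0 \<gamma> (r x u) * (px x * pu u)"
    using gamma_post_bounds(1)[OF gamma_pos] px_pos[OF x] pu_pos[OF u] by simp
  moreover have "0 \<le> gamma_post1 \<gamma> (r x u) * ((1 - eps u) * (ps x u * pu u))"
    using gamma_post_bounds(3)[OF gamma_pos] eps_less_1[OF u] ps_nonneg[OF x u] pu_nonneg[OF u] by simp
  ultimately show ?thesis by (simp add: J_integrand_def z)
qed

lemma J_integrand_le_rstar:
  assumes "\<gamma> > 0" "z \<in> space (Mx \<Otimes>\<^sub>M Mu)"
    and px_pos: "\<And>x. x \<in> space Mx \<Longrightarrow> 0 < px x" and pu_pos: "\<And>u. u \<in> space Mu \<Longrightarrow> 0 < pu u"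
  shows "J_integrand \<gamma> r z \<le> J_integrand \<gamma> (rstar Mu pu eps ps dl) z"
proof -
  obtain x u where z: "z = (x, u)" and x: "x \<in> space Mx" and u: "u \<in> space Mu"
    using assms(2) by (auto simp: space_pair_measure)
  define A where "A = px x * pu u"
  define B where "B = (1 - eps u) * (ps x u * pu u)"
  have A: "0 < A" using px_pos[OF x] pu_pos[OF u] by (simp add: A_def)
  have B: "0 \<le> B" using eps_less_1[OF u] ps_nonneg[OF x u] pu_pos[OF u] by (simp add: B_def)
  have "rstar Mu pu eps ps dl x u = B / A" using pu_pos[OF u] by (simp add: rstar_def A_def B_def)
  then show ?thesis
    using gamma_post_mix_le[OF assms(1) less_imp_le[OF A] B, of "r x u"] gamma_post_mix_at_ratio[OF assms(1) A B]
    by (simp add: J_integrand_def z A_def B_def)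
qed

lemma measurable_rstar [measurable]:
  "(\<lambda>(x, u). rstar Mu pu eps ps dl x u) \<in> borel_measurable (Mx \<Otimes>\<^sub>M Mu)"
  unfolding rstar_def by measurable

lemma space_pair_not_null: "emeasure (Mx \<Otimes>\<^sub>M Mu) (space (Mx \<Otimes>\<^sub>M Mu)) \<noteq> 0"
proof -
  have not_null: "emeasure M (space M) \<noteq> 0" if "integral\<^sup>L M f = (1::real)" for M :: "'c measure" and f
  proof
    assume "emeasure M (space M) = 0"
    then have "integral\<^sup>L M f = 0" by (intro integral_eq_zero_AE emeasure_0_AE)
    with that show False by simp
  qed
  have Mu: "emeasure Mu (space Mu) \<noteq> 0"
    using pu_density by (intro not_null[of _ pu]) (simp add: is_density_def)
  then obtain u where "u \<in> space Mu" by fastforce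
  then have "emeasure Mx (space Mx) \<noteq> 0"
    using ps_cond_density by (intro not_null[of _ "\<lambda>x. ps x u"]) (simp add: is_cond_density_def)
  with Mu show ?thesis by (simp add: space_pair_measure M2.emeasure_pair_measure_Times)
qed

lemma Jfun_rstar_le:
  assumes gamma_pos: "\<gamma> > 0"
    and px_pos: "\<And>x. x \<in> space Mx \<Longrightarrow> 0 < px x" and pu_pos: "\<And>u. u \<in> space Mu \<Longrightarrow> 0 < pu u"
    and [measurable]: "(\<lambda>(x, u). r x u) \<in> borel_measurable (Mx \<Otimes>\<^sub>M Mu)"
  shows "Jfun \<gamma> Mx Mu pu eps ps dl (rstar Mu pu eps ps dl) \<le> Jfun \<gamma> Mx Mu pu eps ps dl r"
proof -
  have "0 < Jarg \<gamma> Mx Mu pu eps ps dl r"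
    using J_integrand_pos[OF gamma_pos _ px_pos pu_pos]
    by (simp add: Jarg_eq_integral[OF gamma_pos] integral_pos_of_pos integrable_J_integrand[OF gamma_pos] space_pair_not_null)
  moreover have "Jarg \<gamma> Mx Mu pu eps ps dl r \<le> Jarg \<gamma> Mx Mu pu eps ps dl (rstar Mu pu eps ps dl)"
    using J_integrand_le_rstar[OF gamma_pos _ px_pos pu_pos]
    by (simp add: Jarg_eq_integral[OF gamma_pos] integrable_J_integrand[OF gamma_pos] integral_mono)
  ultimately show ?thesis using gamma_pos by (simp add: Jfun_def divide_right_mono)
qed

end

theorem theorem2:
  fixes \<gamma> :: real
  assumes "\<gamma> > 0"
  shows "(\<forall>a>0. \<exists>C>0. \<exists>\<nu>0>0. \<forall>(Mx :: 'a measure) (Mu :: 'b measure) pu eps ps dl r.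
            contam_model Mx Mu pu eps ps dl
            \<and> (\<lambda>(x, u). r x u) \<in> borel_measurable (Mx \<Otimes>\<^sub>M Mu)
            \<and> (\<forall>x\<in>space Mx. \<forall>u\<in>space Mu. 0 < r x u)
            \<and> a \<le> Jarg \<gamma> Mx Mu pu eps ps dl r
            \<and> nu_contam \<gamma> Mx Mu pu eps dl r \<le> \<nu>0
            \<longrightarrow> \<bar>dgamma \<gamma> Mx Mu pu eps ps dl r - Jfun \<gamma> Mx Mu pu eps ps dl r\<bar>
                  \<le> C * nu_contam \<gamma> Mx Mu pu eps dl r)
       \<and> (\<forall>(Mx :: 'a measure) (Mu :: 'b measure) pu eps ps dl.
            contam_model Mx Mu pu eps ps dl
            \<and> (\<forall>x\<in>space Mx. 0 < pmarg Mu pu eps ps dl x)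
            \<and> (\<forall>u\<in>space Mu. 0 < pu u)
            \<longrightarrow> (\<forall>r. (\<lambda>(x, u). r x u) \<in> borel_measurable (Mx \<Otimes>\<^sub>M Mu)
                   \<and> (\<forall>x\<in>space Mx. \<forall>u\<in>space Mu. 0 < r x u)
                 \<longrightarrow> Jfun \<gamma> Mx Mu pu eps ps dl (rstar Mu pu eps ps dl)
                       \<le> Jfun \<gamma> Mx Mu pu eps ps dl r))"
proof -
  have bound: "\<bar>dgamma \<gamma> Mx Mu pu eps ps dl r - Jfun \<gamma> Mx Mu pu eps ps dl r\<bar>
                 \<le> 1 / (2 * a * \<gamma>) * nu_contam \<gamma> Mx Mu pu eps dl r"
    if "0 < a" "contam_model Mx Mu pu eps ps dl" "(\<lambda>(x, u). r x u) \<in> borel_measurable (Mx \<Otimes>\<^sub>M Mu)"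
      "\<forall>x\<in>space Mx. \<forall>u\<in>space Mu. 0 < r x u" "a \<le> Jarg \<gamma> Mx Mu pu eps ps dl r"
    for a and Mx :: "'a measure" and Mu :: "'b measure" and pu eps ps dl r
    using contamination.dgamma_Jfun_diff_bound[OF contamination.intro[OF that(2)] assms that(3) _ that(1,5)]
      that(4) by blast
  have optimal: "Jfun \<gamma> Mx Mu pu eps ps dl (rstar Mu pu eps ps dl) \<le> Jfun \<gamma> Mx Mu pu eps ps dl r"
    if "contam_model Mx Mu pu eps ps dl" "\<forall>x\<in>space Mx. 0 < pmarg Mu pu eps ps dl x"
      "\<forall>u\<in>space Mu. 0 < pu u" "(\<lambda>(x, u). r x u) \<in> borel_measurable (Mx \<Otimes>\<^sub>M Mu)"
    for Mx :: "'a measure" and Mu :: "'b measure" and pu eps ps dl r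
    using contamination.Jfun_rstar_le[OF contamination.intro[OF that(1)] assms _ _ that(4)] that(2,3) by blast
  show ?thesis
    apply (intro conjI allI impI)
    subgoal for a
      using bound assms by (intro exI[of _ "1 / (2 * a * \<gamma>)"] conjI exI[of _ "1::real"]) auto
    using optimal by blast
qed

end
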